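(* Assume (A1) and (A2), and let $\beta>\max\{\bar\beta_2,\bar\beta_3\}$. Let $x\in\mathcal{C}$ with $\|\nabla g(x)\|\le\varepsilon_1$. If $\nabla^2g(x)\succeq-\varepsilon_2\mathrm{Id}$, then $x$ is an $(\varepsilon_1,2\varepsilon_1,\varepsilon_2+C\varepsilon_1)$-approximate second-order critical point of $\min f(x)$ s.t. $h(x)=0$; in particular $\mathrm{Hess}_{\mathcal{M}_x}f(x)\succeq-(\varepsilon_2+C\varepsilon_1)\mathrm{Id}$, where $$C=\max_{y\in\mathcal{C}}\Big(2\big\|\mathrm{D}(z\mapsto\mathrm{D}h(z)^* )(y)\big\|_{\mathrm{op}}/\underline{\sigma}+\big\|\mathrm{D}(z\mapsto\mathrm{D}\lambda(z)^* )(y)\big\|_{\mathrm{op}}\Big).$$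
   Context: Let $\mathcal{E}$ be a Euclidean space with inner product $\langle\cdot,\cdot\rangle$ and norm $\|\cdot\|$ (2-norm on $\mathbb{R}^m$), and $f\colon\mathcal{E}\to\mathbb{R}$, $h=(h_1,\dots,h_m)\colon\mathcal{E}\to\mathbb{R}^m$ be $C^\infty$. $\mathrm{D}h(x)$ is the differential, $\mathrm{D}h(x)^*$ its adjoint, $\sigma_{\min}=\sigma_m$ the $m$-th singular value. $\mathcal{D}=\{x:\operatorname{rank}\mathrm{D}h(x)=m\}$; for $x\in\mathcal{D}$, $\lambda(x)=(\mathrm{D}h(x)^* )^\dagger[\nabla f(x)]$ (Moore–Penrose), smooth on $\mathcal{D}$. For $\beta\ge0$, $g(x)=f(x)-\langle h(x),\lambda(x)\rangle+\beta\|h(x)\|^2$. For $x\in\mathcal{D}$: $\mathcal{M}_x=\{y:h(y)=h(x)\}$, $\mathrm{Proj}_x$ the orthogonal projector onto $\ker\mathrm{D}h(x)$, $\mathrm{grad}_{\mathcal{M}_x}f(x)=\nabla f(x)-\mathrm{D}h(x)^*[\lambda(x)]$, $\mathrm{Hess}_{\mathcal{M}_x}f(x)=\mathrm{Proj}_x\circ(\nabla^2f(x)-\sum_i\lambda_i(x)\nabla^2h_i(x))\circ\mathrm{Proj}_x$ on $\ker\mathrm{D}h(x)$. (A1): there are $R,\underline{\sigma}>0$ with $\sigma_{\min}(\mathrm{D}h(x))\ge\underline{\sigma}$ for all $x\in\mathcal{C}=\{x:\|h(x)\|\le R\}$. (A2): $\mathcal{M}=\{h=0\}$ and $\mathcal{C}$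 are compact. For $x\in\mathcal{C}$: $C_\lambda(x)=\|\mathrm{D}\lambda(x)\|_{\mathrm{op}}$, $\beta_2(x)=C_\lambda(x)/\sigma_{\min}(\mathrm{D}h(x))$, $\beta_3(x)=1/\sigma_{\min}(\mathrm{D}h(x))$, $\bar\beta_i=\max_{x\in\mathcal{C}}\beta_i(x)$. $x\in\mathcal{D}$ is an $(\varepsilon_0,\varepsilon_1,\varepsilon_2)$-approximate second-order critical point if $\|h(x)\|\le\varepsilon_0$, $\|\mathrm{grad}_{\mathcal{M}_x}f(x)\|\le\varepsilon_1$ and $\mathrm{Hess}_{\mathcal{M}_x}f(x)\succeq-\varepsilon_2\mathrm{Id}$. *)

theory Defs
  imports "HOL-Analysis.Analysis"
begin

text \<open>D vs x is the
  iterated derivative evaluated in the directions of the list vs.\<close>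
definition smooth_real :: "('a::euclidean_space \<Rightarrow> real) \<Rightarrow> bool" where
  "smooth_real f \<longleftrightarrow> (\<exists>D :: 'a list \<Rightarrow> 'a \<Rightarrow> real. D [] = f \<and>
     (\<forall>vs x. ((D vs) has_derivative (\<lambda>v. D (v # vs) x)) (at x)))"

definition Dh :: "('a::euclidean_space \<Rightarrow> 'b::real_normed_vector) \<Rightarrow> 'a \<Rightarrow> 'a \<Rightarrow> 'b" where
  "Dh h x = frechet_derivative h (at x)"

definition grad :: "('a::euclidean_space \<Rightarrow> real) \<Rightarrow> 'a \<Rightarrow> 'a" where
  "grad f x = (\<Sum>b\<in>Basis. frechet_derivative f (at x) b *\<^sub>R b)"

definition hess :: "('a::euclidean_space \<Rightarrow> real) \<Rightarrow> 'a \<Rightarrow> 'a \<Rightarrow> 'a" where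
  "hess f x = frechet_derivative (grad f) (at x)"

definition mp_pinv :: "('a::euclidean_space \<Rightarrow> 'b::euclidean_space) \<Rightarrow> 'b \<Rightarrow> 'a" where
  "mp_pinv T = (SOME P. linear P \<and> T \<circ> P \<circ> T = T \<and> P \<circ> T \<circ> P = P \<and>
      adjoint (T \<circ> P) = T \<circ> P \<and> adjoint (P \<circ> T) = P \<circ> T)"

text \<open>Smallest (m-th) singular value of a linear map A : E -> R^m,
  via its variational characterisation sigma_m(A) = min over unit y of |A^* y|.\<close>
definition sigma_min :: "('a::euclidean_space \<Rightarrow> real^'m) \<Rightarrow> real" where
  "sigma_min A = Inf {norm (adjoint A y) | y. norm y = 1}"

definition fullrank_set :: "('a::euclidean_space \<Rightarrow> real^'m) \<Rightarrow> 'a set" where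
  "fullrank_set h = {x. dim (range (Dh h x)) = CARD('m)}"

definition lam :: "('a::euclidean_space \<Rightarrow> real) \<Rightarrow> ('a \<Rightarrow> real^'m) \<Rightarrow> 'a \<Rightarrow> real^'m" where
  "lam f h x = mp_pinv (adjoint (Dh h x)) (grad f x)"

definition gfun :: "('a::euclidean_space \<Rightarrow> real) \<Rightarrow> ('a \<Rightarrow> real^'m) \<Rightarrow> real \<Rightarrow> 'a \<Rightarrow> real" where
  "gfun f h \<beta> x = f x - h x \<bullet> lam f h x + \<beta> * (norm (h x))\<^sup>2"

definition Proj :: "('a::euclidean_space \<Rightarrow> real^'m) \<Rightarrow> 'a \<Rightarrow> 'a \<Rightarrow> 'a" where
  "Proj h x = closest_point {v. Dh h x v = 0}"

definition gradM :: "('a::euclidean_space \<Rightarrow> real) \<Rightarrow> ('a \<Rightarrow> real^'m) \<Rightarrow> 'a \<Rightarrow> 'a" where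
  "gradM f h x = grad f x - adjoint (Dh h x) (lam f h x)"

definition hessM :: "('a::euclidean_space \<Rightarrow> real) \<Rightarrow> ('a \<Rightarrow> real^'m) \<Rightarrow> 'a \<Rightarrow> 'a \<Rightarrow> 'a" where
  "hessM f h x = Proj h x \<circ>
     (\<lambda>v. hess f x v - (\<Sum>i\<in>UNIV. lam f h x $ i *\<^sub>R hess (\<lambda>y. h y $ i) x v)) \<circ> Proj h x"

definition psd_shift_on :: "'a::real_inner set \<Rightarrow> ('a \<Rightarrow> 'a) \<Rightarrow> real \<Rightarrow> bool" where
  "psd_shift_on S A \<epsilon> \<longleftrightarrow> (\<forall>v\<in>S. v \<bullet> A v + \<epsilon> * (v \<bullet> v) \<ge> 0)"

definition approx_socp ::
  "('a::euclidean_space \<Rightarrow> real) \<Rightarrow> ('a \<Rightarrow> real^'m) \<Rightarrow> real \<Rightarrow> real \<Rightarrow> real \<Rightarrow> 'a \<Rightarrow> bool" where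
  "approx_socp f h \<epsilon>0 \<epsilon>1 \<epsilon>2 x \<longleftrightarrow> x \<in> fullrank_set h \<and> norm (h x) \<le> \<epsilon>0 \<and>
     norm (gradM f h x) \<le> \<epsilon>1 \<and> psd_shift_on {v. Dh h x v = 0} (hessM f h x) \<epsilon>2"

definition C_lam :: "('a::euclidean_space \<Rightarrow> real) \<Rightarrow> ('a \<Rightarrow> real^'m) \<Rightarrow> 'a \<Rightarrow> real" where
  "C_lam f h x = onorm (frechet_derivative (lam f h) (at x))"

definition beta2 :: "('a::euclidean_space \<Rightarrow> real) \<Rightarrow> ('a \<Rightarrow> real^'m) \<Rightarrow> 'a \<Rightarrow> real" where
  "beta2 f h x = C_lam f h x / sigma_min (Dh h x)"

definition beta3 :: "('a::euclidean_space \<Rightarrow> real^'m) \<Rightarrow> 'a \<Rightarrow> real" where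
  "beta3 h x = 1 / sigma_min (Dh h x)"

definition Cconst :: "('a::euclidean_space \<Rightarrow> real) \<Rightarrow> ('a \<Rightarrow> real^'m) \<Rightarrow> real \<Rightarrow> real \<Rightarrow> real" where
  "Cconst f h R \<sigma> = (SUP y\<in>{x. norm (h x) \<le> R}.
      2 * onorm (frechet_derivative (\<lambda>z. Blinfun (adjoint (Dh h z))) (at y)) / \<sigma>
      + onorm (frechet_derivative (\<lambda>z. Blinfun (adjoint (frechet_derivative (lam f h) (at z)))) (at y)))"

end

theory Submission
  imports Defs
begin

text \<open>Where the Gram matrix Dh Dh^* is invertible, the least-squares multiplier \<lambda> is given
  by Cramer's rule, so \<lambda> and the merit function g are smooth there, and
  grad g = gradM - D\<lambda>^*[h] + 2 \<beta> Dh^*[h].  Pairing this identity with Dh^*[h], which is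
  orthogonal to gradM, and with gradM gives |h| \<le> \<epsilon>1, \<beta> \<sigma> |h| \<le> \<epsilon>1 and |gradM| \<le> 2 \<epsilon>1
  as soon as \<beta> exceeds \<beta>2 and \<beta>3.  On ker Dh the quadratic forms of the Hessian of g and
  of the Riemannian Hessian differ by \<Sum>i h_i (D^2\<lambda>_i[v,v] - 2 \<beta> D^2h_i[v,v]), which is at most
  (|D(D\<lambda>^*)| + 2 \<beta> |D(Dh^*)|) |h| |v|^2 \<le> C \<epsilon>1 |v|^2 in absolute value.\<close>

section \<open>Smooth functions\<close>

coinductive smooth_on :: "'a::real_normed_vector set \<Rightarrow> ('a \<Rightarrow> real) \<Rightarrow> bool" for U where
  smooth_onI: "\<lbrakk>\<forall>x\<in>U. (f has_derivative (\<lambda>v. D v x)) (at x); \<forall>v. smooth_on U (D v)\<rbrakk>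
    \<Longrightarrow> smooth_on U f"

text \<open>The derivative of a product is a sum of products, so closure of smooth_on under
  the ring operations is proved by coinduction up to these operations, i.e.\ by coinduction
  for the following inductive closure.\<close>

inductive smooth_closure :: "'a::real_normed_vector set \<Rightarrow> ('a \<Rightarrow> real) \<Rightarrow> bool" for U where
  smooth_closure_base: "smooth_on U f \<Longrightarrow> smooth_closure U f"
| smooth_closure_const: "smooth_closure U (\<lambda>x. c)"
| smooth_closure_add:
    "smooth_closure U f \<Longrightarrow> smooth_closure U g \<Longrightarrow> smooth_closure U (\<lambda>x. f x + g x)"
| smooth_closure_mult:
    "smooth_closure U f \<Longrightarrow> smooth_closure U g \<Longrightarrow> smooth_closure U (\<lambda>x. f x * g x)"
| smooth_closure_inverse:
    "smooth_closure U f \<Longrightarrow> \<forall>x\<in>U. f x \<noteq> 0 \<Longrightarrow> smooth_closure U (\<lambda>x. inverse (f x))"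

lemma smooth_closure_has_derivative:
  assumes "smooth_closure U f"
  shows "\<exists>D. (\<forall>x\<in>U. (f has_derivative (\<lambda>v. D v x)) (at x)) \<and> (\<forall>v. smooth_closure U (D v))"
  using assms
proof induction
  case (smooth_closure_base f)
  then show ?case by (cases rule: smooth_on.cases) (auto intro: smooth_closure.smooth_closure_base)
next
  case (smooth_closure_const c)
  show ?case by (rule exI[of _ "\<lambda>v x. 0"]) (auto intro: smooth_closure.smooth_closure_const)
next
  case (smooth_closure_add f g)
  then obtain D E
    where "\<forall>x\<in>U. (f has_derivative (\<lambda>v. D v x)) (at x)" "\<forall>v. smooth_closure U (D v)"
      and "\<forall>x\<in>U. (g has_derivative (\<lambda>v. E v x)) (at x)" "\<forall>v. smooth_closure U (E v)"
    by blast
  then show ?case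
    by (intro exI[of _ "\<lambda>v x. D v x + E v x"])
      (auto intro!: smooth_closure.smooth_closure_add has_derivative_add)
next
  case (smooth_closure_mult f g)
  then obtain D E
    where "\<forall>x\<in>U. (f has_derivative (\<lambda>v. D v x)) (at x)" "\<forall>v. smooth_closure U (D v)"
      and "\<forall>x\<in>U. (g has_derivative (\<lambda>v. E v x)) (at x)" "\<forall>v. smooth_closure U (E v)"
    by blast
  with smooth_closure_mult.hyps show ?case
    by (intro exI[of _ "\<lambda>v x. f x * E v x + D v x * g x"])
      (auto intro!: smooth_closure.smooth_closure_add smooth_closure.smooth_closure_mult
        has_derivative_mult)
next
  case (smooth_closure_inverse f)
  then obtain D
    where D: "\<forall>x\<in>U. (f has_derivative (\<lambda>v. D v x)) (at x)" "\<forall>v. smooth_closure U (D v)"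
    by blast
  have inv: "smooth_closure U (\<lambda>x. inverse (f x))"
    using smooth_closure_inverse by (intro smooth_closure.smooth_closure_inverse)
  show ?case
  proof (rule exI[of _ "\<lambda>v x. - (inverse (f x) * D v x * inverse (f x))"], intro conjI ballI allI)
    fix x assume "x \<in> U"
    then show "((\<lambda>x. inverse (f x)) has_derivative
        (\<lambda>v. - (inverse (f x) * D v x * inverse (f x)))) (at x)"
      using D smooth_closure_inverse.hyps by (intro Deriv.has_derivative_inverse) auto
  next
    fix v
    have "smooth_closure U (\<lambda>x. (-1) * ((inverse (f x) * D v x) * inverse (f x)))"
      by (intro smooth_closure_mult smooth_closure_const inv D(2)[rule_format])
    then show "smooth_closure U (\<lambda>x. - (inverse (f x) * D v x * inverse (f x)))"
      by (simp only: mult_minus1)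
  qed
qed

lemma smooth_closure_imp_smooth_on: "smooth_closure U f \<Longrightarrow> smooth_on U f"
proof (coinduction arbitrary: f rule: smooth_on.coinduct)
  case (smooth_on f)
  then show ?case using smooth_closure_has_derivative[OF smooth_on] by blast
qed

lemma smooth_on_const: "smooth_on U (\<lambda>x. c)"
  by (rule smooth_closure_imp_smooth_on, rule smooth_closure_const)

lemma smooth_on_add: "smooth_on U f \<Longrightarrow> smooth_on U g \<Longrightarrow> smooth_on U (\<lambda>x. f x + g x)"
  by (rule smooth_closure_imp_smooth_on, rule smooth_closure_add; rule smooth_closure_base)

lemma smooth_on_mult: "smooth_on U f \<Longrightarrow> smooth_on U g \<Longrightarrow> smooth_on U (\<lambda>x. f x * g x)"
  by (rule smooth_closure_imp_smooth_on, rule smooth_closure_mult; rule smooth_closure_base)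

lemma smooth_on_inverse:
  "smooth_on U f \<Longrightarrow> \<forall>x\<in>U. f x \<noteq> 0 \<Longrightarrow> smooth_on U (\<lambda>x. inverse (f x))"
  by (rule smooth_closure_imp_smooth_on, rule smooth_closure_inverse, rule smooth_closure_base)

lemma smooth_on_minus: "smooth_on U f \<Longrightarrow> smooth_on U (\<lambda>x. - f x)"
  using smooth_on_mult[OF smooth_on_const[of U "-1"], of f] by simp

lemma smooth_on_diff: "smooth_on U f \<Longrightarrow> smooth_on U g \<Longrightarrow> smooth_on U (\<lambda>x. f x - g x)"
  using smooth_on_add[OF _ smooth_on_minus, of U f g] by simp

lemma smooth_on_divide:
  "smooth_on U f \<Longrightarrow> smooth_on U g \<Longrightarrow> \<forall>x\<in>U. g x \<noteq> 0 \<Longrightarrow> smooth_on U (\<lambda>x. f x / g x)"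
  using smooth_on_mult[OF _ smooth_on_inverse, of U f g] by (simp add: divide_inverse)

lemma smooth_on_sum: "(\<And>i. i \<in> I \<Longrightarrow> smooth_on U (F i)) \<Longrightarrow> smooth_on U (\<lambda>x. \<Sum>i\<in>I. F i x)"
proof (induction I rule: infinite_finite_induct)
  case (insert i I)
  then show ?case using smooth_on_add[of U "F i" "\<lambda>x. \<Sum>i\<in>I. F i x"] by simp
qed (simp_all add: smooth_on_const)

lemma smooth_on_prod: "(\<And>i. i \<in> I \<Longrightarrow> smooth_on U (F i)) \<Longrightarrow> smooth_on U (\<lambda>x. \<Prod>i\<in>I. F i x)"
proof (induction I rule: infinite_finite_induct)
  case (insert i I)
  then show ?case using smooth_on_mult[of U "F i" "\<lambda>x. \<Prod>i\<in>I. F i x"] by simp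
qed (simp_all add: smooth_on_const)

lemma smooth_on_det:
  fixes A :: "'a::real_normed_vector \<Rightarrow> real^'n^'n"
  assumes "\<And>i j. smooth_on U (\<lambda>x. A x $ i $ j)"
  shows "smooth_on U (\<lambda>x. det (A x))"
  unfolding det_def
  by (rule smooth_on_sum, rule smooth_on_mult, rule smooth_on_const, rule smooth_on_prod,
      rule assms)

lemma smooth_on_subset: "smooth_on V f \<Longrightarrow> U \<subseteq> V \<Longrightarrow> smooth_on U f"
proof (coinduction arbitrary: f rule: smooth_on.coinduct)
  case (smooth_on f)
  then show ?case by (cases rule: smooth_on.cases) blast
qed

lemma smooth_real_imp_smooth_on: "smooth_real f \<Longrightarrow> smooth_on U f"
proof -
  assume "smooth_real f"
  then obtain D where D: "D [] = f" "\<forall>vs x. ((D vs) has_derivative (\<lambda>v. D (v # vs) x)) (at x)"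
    unfolding smooth_real_def by blast
  have "smooth_on UNIV (D vs)" for vs
  proof (coinduction arbitrary: vs rule: smooth_on.coinduct)
    case (smooth_on vs)
    show ?case
      by (rule exI[of _ "D vs"], rule exI[of _ "\<lambda>v. D (v # vs)"]) (use D(2) in blast)
  qed
  from smooth_on_subset[OF this[of "[]"]] show ?thesis unfolding D(1) by blast
qed

section \<open>Directional derivatives, gradients, Hessians and Jacobians\<close>

abbreviation dir_deriv ::
  "('a::real_normed_vector \<Rightarrow> 'b::real_normed_vector) \<Rightarrow> 'a \<Rightarrow> 'a \<Rightarrow> 'b" where
  "dir_deriv f v x \<equiv> frechet_derivative f (at x) v"

abbreviation dir_deriv2 ::
  "('a::real_normed_vector \<Rightarrow> 'b::real_normed_vector) \<Rightarrow> 'a \<Rightarrow> 'a \<Rightarrow> 'b" where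
  "dir_deriv2 f v x \<equiv> dir_deriv (\<lambda>z. dir_deriv f v z) v x"

lemma smooth_on_has_derivative:
  assumes "smooth_on U f" "x \<in> U"
  shows "(f has_derivative frechet_derivative f (at x)) (at x)"
  using assms(1)
proof (cases rule: smooth_on.cases)
  case (smooth_onI D)
  with assms(2) have "(f has_derivative (\<lambda>v. D v x)) (at x)" by blast
  with frechet_derivative_at show ?thesis by metis
qed

lemma smooth_on_differentiable: "smooth_on U f \<Longrightarrow> x \<in> U \<Longrightarrow> f differentiable (at x)"
  using smooth_on_has_derivative differentiable_def by blast

lemma smooth_on_continuous_on: "smooth_on U f \<Longrightarrow> continuous_on U f"
  by (meson continuous_at_imp_continuous_on differentiable_imp_continuous_within
      smooth_on_differentiable)

lemma frechet_derivative_cong_open: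
  assumes "open U" "x \<in> U" "\<And>z. z \<in> U \<Longrightarrow> F z = G z"
  shows "frechet_derivative F (at x) = frechet_derivative G (at x)"
proof -
  have "(F has_derivative D) (at x) \<longleftrightarrow> (G has_derivative D) (at x)" for D
    using has_derivative_transform_within_open[OF _ assms(1,2)] assms(3) by metis
  then show ?thesis unfolding frechet_derivative_def by simp
qed

lemma smooth_on_cong:
  assumes "open U" "smooth_on U f" "\<And>z. z \<in> U \<Longrightarrow> g z = f z"
  shows "smooth_on U g"
  using assms(2,3)
proof (coinduction arbitrary: f g rule: smooth_on.coinduct)
  case (smooth_on f g)
  from smooth_on(1) show ?case
  proof (cases rule: smooth_on.cases)
    case (smooth_onI D)
    show ?thesis
    proof (rule exI[of _ g], rule exI[of _ D], intro conjI refl ballI allI disjI2)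
      fix x assume "x \<in> U"
      show "(g has_derivative (\<lambda>v. D v x)) (at x)"
        by (rule has_derivative_transform_within_open[OF _ assms(1) \<open>x \<in> U\<close>])
          (use smooth_onI(1) smooth_on(2) \<open>x \<in> U\<close> in auto)
    next
      show "smooth_on U (D v)" for v using smooth_onI(2) by blast
    qed
  qed
qed

lemma smooth_on_dir_deriv:
  assumes "open U" "smooth_on U f"
  shows "smooth_on U (\<lambda>x. dir_deriv f v x)"
  using assms(2)
proof (cases rule: smooth_on.cases)
  case (smooth_onI D)
  have "dir_deriv f v z = D v z" if "z \<in> U" for z
    using smooth_onI(1) that frechet_derivative_at by metis
  then show ?thesis using smooth_on_cong[OF assms(1) smooth_onI(2)[rule_format, of v]] by auto
qed

lemma linear_eq_inner_sum_Basis: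
  fixes L :: "'a::euclidean_space \<Rightarrow> real"
  assumes "linear L"
  shows "L v = v \<bullet> (\<Sum>b\<in>Basis. L b *\<^sub>R b)"
proof -
  have "L v = L (\<Sum>b\<in>Basis. (v \<bullet> b) *\<^sub>R b)" by (simp add: euclidean_representation)
  also have "\<dots> = (\<Sum>b\<in>Basis. (v \<bullet> b) * L b)"
    using assms by (simp add: linear_sum linear_scale)
  finally show ?thesis by (simp add: inner_sum_right mult.commute)
qed

lemma dir_deriv_eq_inner_grad:
  fixes f :: "'a::euclidean_space \<Rightarrow> real"
  assumes "f differentiable (at z)"
  shows "dir_deriv f v z = v \<bullet> grad f z"
proof -
  have "linear (frechet_derivative f (at z))"
    using assms frechet_derivative_works has_derivative_linear by blast
  then show ?thesis unfolding grad_def by (rule linear_eq_inner_sum_Basis)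
qed

lemma inner_grad_grad:
  fixes f g :: "'a::euclidean_space \<Rightarrow> real"
  shows "grad f z \<bullet> grad g z = (\<Sum>b\<in>Basis. dir_deriv f b z * dir_deriv g b z)"
  unfolding grad_def
  by (simp add: inner_sum_left inner_sum_right inner_Basis if_distrib sum.delta mult.commute
      cong: if_cong)

lemma grad_has_derivative:
  fixes f :: "'a::euclidean_space \<Rightarrow> real"
  assumes "open U" "smooth_on U f" "x \<in> U"
  shows "(grad f has_derivative (\<lambda>w. \<Sum>b\<in>Basis. dir_deriv (\<lambda>z. dir_deriv f b z) w x *\<^sub>R b)) (at x)"
  unfolding grad_def[abs_def]
  by (intro has_derivative_sum has_derivative_scaleR_left
      smooth_on_has_derivative[OF smooth_on_dir_deriv[OF assms(1,2)] assms(3)])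

lemma continuous_on_grad:
  fixes f :: "'a::euclidean_space \<Rightarrow> real"
  assumes "open U" "smooth_on U f"
  shows "continuous_on U (grad f)"
  unfolding grad_def[abs_def]
  by (intro continuous_on_sum continuous_on_scaleR continuous_on_const
      smooth_on_continuous_on[OF smooth_on_dir_deriv[OF assms]])

lemma dir_deriv_dir_deriv_linear:
  fixes f :: "'a::euclidean_space \<Rightarrow> real"
  assumes "open U" "smooth_on U f" "x \<in> U"
  shows "dir_deriv (\<lambda>z. dir_deriv f v z) w x
    = (\<Sum>b\<in>Basis. (v \<bullet> b) * dir_deriv (\<lambda>z. dir_deriv f b z) w x)"
proof -
  have "dir_deriv f v z = (\<Sum>b\<in>Basis. (v \<bullet> b) * dir_deriv f b z)" if "z \<in> U" for z
    unfolding dir_deriv_eq_inner_grad[OF smooth_on_differentiable[OF assms(2) that], of v]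
    by (simp add: grad_def inner_sum_right mult.commute)
  then have "frechet_derivative (\<lambda>z. dir_deriv f v z) (at x)
      = frechet_derivative (\<lambda>z. \<Sum>b\<in>Basis. (v \<bullet> b) * dir_deriv f b z) (at x)"
    by (rule frechet_derivative_cong_open[OF assms(1,3)])
  also have "\<dots> = (\<lambda>w. \<Sum>b\<in>Basis. (v \<bullet> b) * dir_deriv (\<lambda>z. dir_deriv f b z) w x)"
    by (rule frechet_derivative_at[symmetric], intro has_derivative_sum has_derivative_mult_right
        smooth_on_has_derivative[OF smooth_on_dir_deriv[OF assms(1,2)] assms(3)])
  finally show ?thesis by simp
qed

lemma inner_hess:
  fixes f :: "'a::euclidean_space \<Rightarrow> real"
  assumes "open U" "smooth_on U f" "x \<in> U"
  shows "v \<bullet> hess f x v = dir_deriv2 f v x"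
proof -
  have "hess f x = (\<lambda>w. \<Sum>b\<in>Basis. dir_deriv (\<lambda>z. dir_deriv f b z) w x *\<^sub>R b)"
    unfolding hess_def
    by (rule frechet_derivative_at[symmetric], rule grad_has_derivative[OF assms])
  then show ?thesis
    using dir_deriv_dir_deriv_linear[OF assms, of v v] by (simp add: inner_sum_right mult.commute)
qed

definition jac :: "('m::finite \<Rightarrow> 'a::real_normed_vector \<Rightarrow> real) \<Rightarrow> 'a \<Rightarrow> 'a \<Rightarrow> real^'m" where
  "jac \<phi> z v = (\<chi> i. dir_deriv (\<phi> i) v z)"

lemma jac_eq_inner_grad:
  fixes \<phi> :: "'m::finite \<Rightarrow> 'a::euclidean_space \<Rightarrow> real"
  assumes "\<And>i. \<phi> i differentiable (at z)"
  shows "jac \<phi> z = (\<lambda>v. \<chi> i. v \<bullet> grad (\<phi> i) z)"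
  unfolding jac_def by (simp add: dir_deriv_eq_inner_grad[OF assms])

lemma linear_jac:
  fixes \<phi> :: "'m::finite \<Rightarrow> 'a::euclidean_space \<Rightarrow> real"
  assumes "\<And>i. \<phi> i differentiable (at z)"
  shows "linear (jac \<phi> z)"
  unfolding jac_eq_inner_grad[OF assms] by (simp add: linear_iff vec_eq_iff inner_add_left)

lemma adjoint_jac:
  fixes \<phi> :: "'m::finite \<Rightarrow> 'a::euclidean_space \<Rightarrow> real"
  assumes "\<And>i. \<phi> i differentiable (at z)"
  shows "adjoint (jac \<phi> z) = (\<lambda>y. \<Sum>i\<in>UNIV. y $ i *\<^sub>R grad (\<phi> i) z)"
  by (rule adjoint_unique)
    (simp add: jac_eq_inner_grad[OF assms] inner_vec_def inner_sum_right mult.commute)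

lemma onorm_jac_le:
  fixes \<phi> :: "'m::finite \<Rightarrow> 'a::euclidean_space \<Rightarrow> real"
  assumes "\<And>i. \<phi> i differentiable (at z)"
  shows "onorm (jac \<phi> z) \<le> (\<Sum>i\<in>UNIV. norm (grad (\<phi> i) z))"
proof (rule onorm_bound)
  show "0 \<le> (\<Sum>i\<in>UNIV. norm (grad (\<phi> i) z))" by (simp add: sum_nonneg)
  fix v
  have "norm (jac \<phi> z v) \<le> (\<Sum>i\<in>UNIV. \<bar>jac \<phi> z v $ i\<bar>)" by (rule norm_le_l1_cart)
  also have "\<dots> \<le> (\<Sum>i\<in>UNIV. norm (grad (\<phi> i) z) * norm v)"
    unfolding jac_eq_inner_grad[OF assms]
    by (rule sum_mono) (simp add: Cauchy_Schwarz_ineq2 mult.commute)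
  finally show "norm (jac \<phi> z v) \<le> (\<Sum>i\<in>UNIV. norm (grad (\<phi> i) z)) * norm v"
    by (simp add: sum_distrib_right)
qed

lemma has_derivative_jac:
  fixes F :: "'a::euclidean_space \<Rightarrow> real^'m::finite"
  assumes "\<And>i. (\<lambda>y. F y $ i) differentiable (at z)"
  shows "(F has_derivative jac (\<lambda>i y. F y $ i) z) (at z)"
proof -
  have "((\<lambda>y. F y \<bullet> b) has_derivative (\<lambda>v. jac (\<lambda>i y. F y $ i) z v \<bullet> b)) (at z)"
    if "b \<in> Basis" for b
  proof -
    from that obtain i where b: "b = axis i 1" unfolding Basis_vec_def by auto
    show ?thesis
      unfolding b inner_axis jac_def
      using frechet_derivative_works[THEN iffD1, OF assms[of i]] by simp
  qed
  then show ?thesis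
    using has_derivative_componentwise_within[of F "jac (\<lambda>i y. F y $ i) z" z UNIV] by blast
qed

definition coord_blinfun :: "'m::finite \<Rightarrow> 'a::real_normed_vector \<Rightarrow> ((real^'m) \<Rightarrow>\<^sub>L 'a)" where
  "coord_blinfun i b = Blinfun (\<lambda>y. y $ i *\<^sub>R b)"

lemma coord_blinfun_apply [simp]:
  fixes y :: "real^'m::finite"
  shows "blinfun_apply (coord_blinfun i b) y = y $ i *\<^sub>R b"
proof -
  have "bounded_linear (\<lambda>y::real^'m. y $ i *\<^sub>R b)"
    by (rule bounded_linear_compose[OF bounded_linear_scaleR_left bounded_linear_vec_nth])
  then show ?thesis unfolding coord_blinfun_def by (simp add: bounded_linear_Blinfun_apply)
qed

lemma Blinfun_adjoint_jac:
  fixes \<phi> :: "'m::finite \<Rightarrow> 'a::euclidean_space \<Rightarrow> real"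
  assumes "\<And>i. \<phi> i differentiable (at z)"
  shows "Blinfun (adjoint (jac \<phi> z))
    = (\<Sum>i\<in>UNIV. \<Sum>b\<in>Basis. dir_deriv (\<phi> i) b z *\<^sub>R coord_blinfun i b)"
proof (rule blinfun_eqI)
  have "bounded_linear (\<lambda>y::real^'m. \<Sum>i\<in>UNIV. y $ i *\<^sub>R grad (\<phi> i) z)"
    by (intro bounded_linear_sum bounded_linear_compose[OF bounded_linear_scaleR_left
          bounded_linear_vec_nth, unfolded o_def])
  then show "blinfun_apply (Blinfun (adjoint (jac \<phi> z))) y
      = blinfun_apply (\<Sum>i\<in>UNIV. \<Sum>b\<in>Basis. dir_deriv (\<phi> i) b z *\<^sub>R coord_blinfun i b) y" for y
    unfolding adjoint_jac[OF assms]
    by (simp add: bounded_linear_Blinfun_apply blinfun.sum_left blinfun.scaleR_left grad_def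
        scaleR_sum_right mult.commute)
qed

abbreviation adjoint_jac_deriv ::
  "('m::finite \<Rightarrow> 'a::euclidean_space \<Rightarrow> real) \<Rightarrow> 'a \<Rightarrow> 'a \<Rightarrow> ((real^'m) \<Rightarrow>\<^sub>L 'a)" where
  "adjoint_jac_deriv \<phi> x \<equiv> frechet_derivative (\<lambda>z. Blinfun (adjoint (jac \<phi> z))) (at x)"

lemma adjoint_jac_has_derivative:
  fixes \<phi> :: "'m::finite \<Rightarrow> 'a::euclidean_space \<Rightarrow> real"
  assumes "open U" "\<And>i. smooth_on U (\<phi> i)" "x \<in> U"
  shows "((\<lambda>z. Blinfun (adjoint (jac \<phi> z))) has_derivative
    (\<lambda>w. \<Sum>i\<in>UNIV. \<Sum>b\<in>Basis. dir_deriv (\<lambda>z. dir_deriv (\<phi> i) b z) w x *\<^sub>R coord_blinfun i b)) (at x)"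
proof -
  have "((\<lambda>z. \<Sum>i\<in>UNIV. \<Sum>b\<in>Basis. dir_deriv (\<phi> i) b z *\<^sub>R coord_blinfun i b) has_derivative
    (\<lambda>w. \<Sum>i\<in>UNIV. \<Sum>b\<in>Basis. dir_deriv (\<lambda>z. dir_deriv (\<phi> i) b z) w x *\<^sub>R
      (coord_blinfun i b :: (real^'m) \<Rightarrow>\<^sub>L 'a))) (at x)"
    by (intro has_derivative_sum has_derivative_scaleR_left
        smooth_on_has_derivative[OF smooth_on_dir_deriv[OF assms(1,2)] assms(3)])
  then show ?thesis
    by (rule has_derivative_transform_within_open[OF _ assms(1,3)])
      (simp add: Blinfun_adjoint_jac smooth_on_differentiable[OF assms(2)])
qed

lemma bounded_linear_adjoint_jac_deriv:
  fixes \<phi> :: "'m::finite \<Rightarrow> 'a::euclidean_space \<Rightarrow> real"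
  assumes "open U" "\<And>i. smooth_on U (\<phi> i)" "x \<in> U"
  shows "bounded_linear (adjoint_jac_deriv \<phi> x)"
proof -
  note D = adjoint_jac_has_derivative[OF assms]
  from has_derivative_bounded_linear[OF D] show ?thesis unfolding frechet_derivative_at[OF D] .
qed

lemma abs_sum_dir_deriv2_le:
  fixes \<phi> :: "'m::finite \<Rightarrow> 'a::euclidean_space \<Rightarrow> real"
  assumes "open U" "\<And>i. smooth_on U (\<phi> i)" "x \<in> U"
  shows "\<bar>\<Sum>i\<in>UNIV. y $ i * dir_deriv2 (\<phi> i) v x\<bar>
    \<le> onorm (adjoint_jac_deriv \<phi> x) * (v \<bullet> v) * norm y"
proof -
  let ?F = "adjoint_jac_deriv \<phi> x"
  have expand: "dir_deriv2 (\<phi> i) v x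
      = (\<Sum>b\<in>Basis. (v \<bullet> b) * dir_deriv (\<lambda>z. dir_deriv (\<phi> i) b z) v x)" for i
    by (rule dir_deriv_dir_deriv_linear[OF assms(1,2,3)])
  have "(\<Sum>i\<in>UNIV. y $ i * dir_deriv2 (\<phi> i) v x) = v \<bullet> blinfun_apply (?F v) y"
    unfolding frechet_derivative_at[OF adjoint_jac_has_derivative[OF assms], symmetric]
    by (simp add: expand blinfun.sum_left blinfun.scaleR_left inner_sum_right sum_distrib_left
        algebra_simps)
  also have "\<bar>\<dots>\<bar> \<le> norm v * norm (blinfun_apply (?F v) y)"
    by (rule Cauchy_Schwarz_ineq2)
  also have "\<dots> \<le> norm v * (norm (?F v) * norm y)"
    by (intro mult_left_mono norm_blinfun) auto
  also have "\<dots> \<le> norm v * ((onorm ?F * norm v) * norm y)"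
    by (intro mult_left_mono mult_right_mono onorm[OF bounded_linear_adjoint_jac_deriv[OF assms]])
      auto
  finally show ?thesis by (simp add: power2_norm_eq_inner[symmetric] power2_eq_square algebra_simps)
qed

text \<open>Continuity of x \<mapsto> onorm (adjoint_jac_deriv \<phi> x) is not available, but a continuous
  majorant suffices for boundedness on compact sets.\<close>

lemma onorm_adjoint_jac_deriv_continuous_majorant:
  fixes \<phi> :: "'m::finite \<Rightarrow> 'a::euclidean_space \<Rightarrow> real"
  assumes "open U" "\<And>i. smooth_on U (\<phi> i)"
  obtains K where "continuous_on U K" "\<And>x. x \<in> U \<Longrightarrow> onorm (adjoint_jac_deriv \<phi> x) \<le> K x"
proof
  let ?dd = "\<lambda>i b z. dir_deriv (\<phi> i) b z"
  let ?E = "\<lambda>i b. coord_blinfun i b :: (real^'m) \<Rightarrow>\<^sub>L 'a"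
  define K where "K x = (\<Sum>i\<in>UNIV. \<Sum>b\<in>Basis. norm (grad (?dd i b) x) * norm (?E i b))" for x
  show "continuous_on U K"
    unfolding K_def
    by (intro continuous_on_sum continuous_on_mult continuous_on_const continuous_on_norm
        continuous_on_grad[OF assms(1) smooth_on_dir_deriv[OF assms]])
  fix x assume x: "x \<in> U"
  show "onorm (adjoint_jac_deriv \<phi> x) \<le> K x"
    unfolding frechet_derivative_at[OF adjoint_jac_has_derivative[OF assms x], symmetric]
  proof (rule onorm_bound)
    show "0 \<le> K x" unfolding K_def by (intro sum_nonneg mult_nonneg_nonneg) auto
    fix w :: 'a
    have term_le: "norm (dir_deriv (?dd i b) w x *\<^sub>R ?E i b)
        \<le> norm (grad (?dd i b) x) * norm (?E i b) * norm w" for i b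
    proof -
      have diff: "?dd i b differentiable (at x)"
        by (rule smooth_on_differentiable[OF smooth_on_dir_deriv[OF assms] x])
      have "\<bar>dir_deriv (?dd i b) w x\<bar> \<le> norm w * norm (grad (?dd i b) x)"
        unfolding dir_deriv_eq_inner_grad[OF diff] by (rule Cauchy_Schwarz_ineq2)
      from mult_left_mono[OF this norm_ge_zero[of "?E i b"]] show ?thesis
        by (simp add: algebra_simps)
    qed
    have "norm (\<Sum>i\<in>UNIV. \<Sum>b\<in>Basis. dir_deriv (?dd i b) w x *\<^sub>R ?E i b)
        \<le> (\<Sum>i\<in>UNIV. \<Sum>b\<in>Basis. norm (dir_deriv (?dd i b) w x *\<^sub>R ?E i b))"
      by (rule order_trans[OF norm_sum sum_mono[OF norm_sum]])
    also have "\<dots> \<le> K x * norm w"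
      unfolding K_def sum_distrib_right by (intro sum_mono term_le)
    finally show "norm (\<Sum>i\<in>UNIV. \<Sum>b\<in>Basis. dir_deriv (?dd i b) w x *\<^sub>R ?E i b)
        \<le> K x * norm w" .
  qed
qed

section \<open>Linear-algebraic estimates\<close>

definition penrose_inverse ::
  "('a::euclidean_space \<Rightarrow> 'b::euclidean_space) \<Rightarrow> ('b \<Rightarrow> 'a) \<Rightarrow> bool" where
  "penrose_inverse T P \<longleftrightarrow> linear P \<and> T \<circ> P \<circ> T = T \<and> P \<circ> T \<circ> P = P \<and>
     adjoint (T \<circ> P) = T \<circ> P \<and> adjoint (P \<circ> T) = P \<circ> T"

lemma penrose_inverse_mp_pinv:
  assumes "penrose_inverse T P"
  shows "penrose_inverse T (mp_pinv T)"
  unfolding mp_pinv_def penrose_inverse_def[symmetric]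
  using assms by (rule someI[where P = "penrose_inverse T"])

lemma adjoint_penrose_inverse_adjoint:
  fixes J :: "'a::euclidean_space \<Rightarrow> 'b::euclidean_space"
  assumes "linear J" "penrose_inverse (adjoint J) Q"
  shows "J (adjoint J (Q w)) = J w"
proof -
  let ?T = "adjoint J"
  have linTQ: "linear (?T \<circ> Q)"
    using assms adjoint_linear linear_compose unfolding penrose_inverse_def by blast
  have "(J (?T (Q w)) - J w) \<bullet> y = 0" for y
  proof -
    have "?T (Q w) \<bullet> ?T y = w \<bullet> adjoint (?T \<circ> Q) (?T y)"
      using adjoint_clauses(1)[OF linTQ, of w "?T y"] by (simp add: inner_commute)
    also have "\<dots> = w \<bullet> ?T y"
      using assms(2) unfolding penrose_inverse_def by (metis comp_apply)
    finally show ?thesis by (simp add: adjoint_clauses[OF assms(1)] inner_diff_left)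
  qed
  then show ?thesis by (metis inner_eq_zero_iff right_minus_eq)
qed

lemma ex_penrose_inverse_adjoint:
  fixes J :: "'a::euclidean_space \<Rightarrow> real^'m::finite" and G :: "real^'m^'m"
  assumes lin: "linear J" and G: "\<And>u. G *v u = J (adjoint J u)" and "invertible G"
  shows "\<exists>P. penrose_inverse (adjoint J) P"
proof -
  let ?T = "adjoint J"
  obtain G' where inv: "G ** G' = mat 1" "G' ** G = mat 1"
    using \<open>invertible G\<close> unfolding invertible_def by blast
  define P where "P w = G' *v J w" for w
  have PT: "P (?T y) = y" for y
    unfolding P_def G[symmetric] by (simp add: matrix_vector_mul_assoc inv)
  have G'_sym: "(G' *v a) \<bullet> b = a \<bullet> (G' *v b)" for a b
  proof -
    have "(G' *v a) \<bullet> b = (G' *v a) \<bullet> (G *v (G' *v b))"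
      by (simp add: matrix_vector_mul_assoc inv)
    also have "\<dots> = (G *v (G' *v a)) \<bullet> (G' *v b)"
      unfolding G by (metis adjoint_clauses[OF lin])
    also have "\<dots> = a \<bullet> (G' *v b)" by (simp add: matrix_vector_mul_assoc inv)
    finally show ?thesis .
  qed
  have "penrose_inverse ?T P"
    unfolding penrose_inverse_def
  proof (intro conjI)
    show "linear P"
      using linear_compose[OF lin matrix_vector_mul_linear[of G']]
      by (simp add: P_def[abs_def] o_def)
    show "?T \<circ> P \<circ> ?T = ?T" "P \<circ> ?T \<circ> P = P" by (simp_all add: o_def PT)
    show "adjoint (?T \<circ> P) = ?T \<circ> P"
      by (rule adjoint_unique)
        (simp add: P_def adjoint_clauses[OF lin], metis G'_sym inner_commute)
    show "adjoint (P \<circ> ?T) = P \<circ> ?T"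
      by (rule adjoint_unique) (simp add: PT)
  qed
  then show ?thesis by blast
qed

lemma gram_mult_mp_pinv_adjoint:
  fixes J :: "'a::euclidean_space \<Rightarrow> real^'m::finite" and G :: "real^'m^'m"
  assumes "linear J" and G: "\<And>u. G *v u = J (adjoint J u)" and "invertible G"
  shows "G *v mp_pinv (adjoint J) w = J w"
proof -
  obtain P where "penrose_inverse (adjoint J) P" using ex_penrose_inverse_adjoint[OF assms] ..
  then show ?thesis
    unfolding G by (intro adjoint_penrose_inverse_adjoint[OF assms(1)] penrose_inverse_mp_pinv)
qed

lemma sigma_min_mult_norm_le:
  fixes J :: "'a::euclidean_space \<Rightarrow> real^'m::finite"
  assumes "linear J"
  shows "sigma_min J * norm y \<le> norm (adjoint J y)"
proof (cases "y = 0")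
  case True
  then show ?thesis using linear_0[OF adjoint_linear[OF assms]] by simp
next
  case False
  have "sigma_min J \<le> norm (adjoint J (y /\<^sub>R norm y))"
    unfolding sigma_min_def using False by (intro cInf_lower) (auto intro: bdd_belowI[of _ 0])
  also have "\<dots> = norm (adjoint J y) / norm y"
    using linear_scale[OF adjoint_linear[OF assms]] by (simp add: divide_inverse mult.commute)
  finally show ?thesis using False by (simp add: le_divide_eq)
qed

lemma inner_closest_point_kernel:
  fixes J :: "'a::euclidean_space \<Rightarrow> 'b::euclidean_space"
  assumes "linear J" "J v = 0"
  shows "v \<bullet> closest_point {w. J w = 0} u = v \<bullet> u"
proof -
  let ?S = "{w. J w = 0}"
  let ?p = "closest_point ?S u"
  have "subspace ?S" using assms(1) by (auto simp: subspace_def linear_add linear_scale linear_0)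
  then have cv: "convex ?S" and cl: "closed ?S"
    by (simp_all add: subspace_imp_convex closed_subspace)
  have "?p \<in> ?S" using linear_0[OF assms(1)] by (intro closest_point_in_set[OF cl]) auto
  then have "?p + v \<in> ?S" "?p - v \<in> ?S" using assms by (auto simp: linear_add linear_diff)
  from closest_point_dot[OF cv cl this(1), of u] closest_point_dot[OF cv cl this(2), of u]
  have "(u - ?p) \<bullet> v = 0" by (simp add: inner_diff_right)
  then show ?thesis by (simp add: inner_diff_left inner_commute[of v])
qed

text \<open>In the application c is the gradient of the merit function, r the Riemannian gradient,
  y = h x and L = D\<lambda>(x).  Testing the identity with u = adjoint J y, which is orthogonal to r, gives
  2 \<beta> |u|^2 \<le> (\<epsilon> + |L| |y|) |u| and hence (2 \<beta> s - |L|) |y| \<le> \<epsilon>;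
  testing it with u = r gives |r| \<le> \<epsilon> + |L| |y|.\<close>

lemma first_order_estimates:
  fixes J L :: "'a::euclidean_space \<Rightarrow> real^'m::finite" and r c :: 'a and y :: "real^'m"
  assumes lin: "linear J" and bl: "bounded_linear L" and s: "0 < s"
    and sig: "\<And>u. s * norm u \<le> norm (adjoint J u)"
    and Jr: "J r = 0"
    and c: "\<And>u. u \<bullet> c = u \<bullet> r - y \<bullet> L u + 2 * \<beta> * (J u \<bullet> y)"
    and c_le: "norm c \<le> \<epsilon>"
    and beta_L: "onorm L / s < \<beta>" and beta_1: "1 / s < \<beta>"
  shows "norm y \<le> \<epsilon>" "\<beta> * s * norm y \<le> \<epsilon>" "norm r \<le> 2 * \<epsilon>"
proof -
  let ?C = "onorm L" and ?a = "adjoint J y"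
  have C_lt: "?C < \<beta> * s" and one_lt: "1 < \<beta> * s"
    using beta_L beta_1 s by (simp_all add: field_simps)
  have "0 < 1 / s" using s by simp
  with beta_1 have \<beta>: "0 \<le> \<beta>" by linarith
  have \<epsilon>: "0 \<le> \<epsilon>" using c_le norm_ge_zero order_trans by blast
  have L_le: "\<bar>y \<bullet> L u\<bar> \<le> norm y * (?C * norm u)" for u
    using Cauchy_Schwarz_ineq2[of y "L u"] onorm[OF bl, of u] norm_ge_zero[of y]
    by (meson mult_left_mono order_trans)
  have c_inner: "u \<bullet> c \<le> norm u * \<epsilon>" for u
    using Cauchy_Schwarz_ineq2[of u c] c_le norm_ge_zero[of u]
    by (meson abs_le_D1 mult_left_mono order_trans)
  have y_le: "2 * \<beta> * s * norm y \<le> \<epsilon> + ?C * norm y"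
  proof (cases "?a = 0")
    case True
    then have "norm y = 0" using sig[of y] s by (simp add: mult_le_0_iff)
    then show ?thesis using \<epsilon> by simp
  next
    case False
    have "?a \<bullet> r = 0" using adjoint_clauses(2)[OF lin, of y r] Jr by simp
    then have "?a \<bullet> c = - (y \<bullet> L ?a) + 2 * \<beta> * (?a \<bullet> ?a)"
      using c[of ?a] by (simp add: adjoint_clauses[OF lin] inner_commute)
    then have "2 * \<beta> * (norm ?a * norm ?a) \<le> norm ?a * \<epsilon> + norm y * (?C * norm ?a)"
      using c_inner[of ?a] L_le[of ?a]
      by (simp add: power2_norm_eq_inner[symmetric] power2_eq_square)
    then have "norm ?a * (2 * \<beta> * norm ?a) \<le> norm ?a * (\<epsilon> + ?C * norm y)"
      by (simp add: algebra_simps)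
    then have "2 * \<beta> * norm ?a \<le> \<epsilon> + ?C * norm y"
      using False by (simp add: mult_le_cancel_left_pos)
    moreover have "\<beta> * (s * norm y) \<le> \<beta> * norm ?a"
      using sig[of y] \<beta> by (rule mult_left_mono)
    ultimately show ?thesis using C_lt by (simp add: algebra_simps)
  qed
  have "?C * norm y \<le> \<beta> * s * norm y" using C_lt by (intro mult_right_mono) auto
  with y_le show \<beta>y: "\<beta> * s * norm y \<le> \<epsilon>" by simp
  have "norm y \<le> \<beta> * s * norm y" using one_lt by (simp add: mult_le_cancel_right1)
  with \<beta>y show "norm y \<le> \<epsilon>" by simp
  have "norm r * norm r \<le> norm r * (\<epsilon> + ?C * norm y)"
    using c[of r] c_inner[of r] L_le[of r] Jr
    by (simp add: power2_norm_eq_inner[symmetric] power2_eq_square algebra_simps)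
  then have "norm r \<le> \<epsilon> + ?C * norm y"
    using \<epsilon> onorm_pos_le[OF bl] by (cases "r = 0") (simp_all add: mult_le_cancel_left_pos)
  then show "norm r \<le> 2 * \<epsilon>" using y_le \<beta>y \<open>?C * norm y \<le> \<beta> * s * norm y\<close> by simp
qed

section \<open>The least-squares multiplier and the merit function\<close>

locale smooth_constraints =
  fixes f :: "'a::euclidean_space \<Rightarrow> real" and h :: "'a \<Rightarrow> real^'m::finite"
  assumes smooth_f: "smooth_on UNIV f"
    and smooth_h: "\<And>i. smooth_on UNIV (\<lambda>y. h y $ i)"
begin

abbreviation hc :: "'m \<Rightarrow> 'a \<Rightarrow> real" where
  "hc \<equiv> \<lambda>i y. h y $ i"

lemma smooth_on_f: "smooth_on U f"
  using smooth_on_subset[OF smooth_f] by blast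

lemma smooth_on_hc: "smooth_on U (hc i)"
  using smooth_on_subset[OF smooth_h] by blast

lemma smooth_on_dir_deriv_f: "smooth_on U (\<lambda>z. dir_deriv f b z)"
  using smooth_on_subset[OF smooth_on_dir_deriv[OF open_UNIV smooth_f]] by blast

lemma smooth_on_dir_deriv_hc: "smooth_on U (\<lambda>z. dir_deriv (hc i) b z)"
  using smooth_on_subset[OF smooth_on_dir_deriv[OF open_UNIV smooth_h]] by blast

lemma differentiable_hc: "hc i differentiable (at z)"
  by (rule smooth_on_differentiable[OF smooth_h UNIV_I])

lemma Dh_eq_jac: "Dh h z = jac hc z"
  unfolding Dh_def
  by (rule frechet_derivative_at[symmetric], rule has_derivative_jac, rule differentiable_hc)

lemma linear_Dh: "linear (Dh h z)"
  unfolding Dh_eq_jac by (rule linear_jac[OF differentiable_hc])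

definition gram :: "'a \<Rightarrow> real^'m^'m" where
  "gram z = (\<chi> i j. grad (hc i) z \<bullet> grad (hc j) z)"

lemma gram_mult: "gram z *v u = Dh h z (adjoint (Dh h z) u)"
  unfolding Dh_eq_jac adjoint_jac[OF differentiable_hc]
  unfolding jac_eq_inner_grad[OF differentiable_hc]
  by (simp add: vec_eq_iff gram_def matrix_vector_mult_def inner_sum_left,
      simp add: inner_commute mult.commute)

lemma smooth_on_gram: "smooth_on U (\<lambda>z. gram z $ i $ j)"
  unfolding gram_def inner_grad_grad
  by (simp, intro smooth_on_sum smooth_on_mult smooth_on_dir_deriv_hc)

definition regular :: "'a set" where
  "regular = {z. det (gram z) \<noteq> 0}"

lemma open_regular: "open regular"
  unfolding regular_def
  by (rule open_Collect_neq[OF smooth_on_continuous_on[OF smooth_on_det[OF smooth_on_gram]]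
        continuous_on_const])

lemma invertible_gram: "z \<in> regular \<Longrightarrow> invertible (gram z)"
  by (simp add: regular_def invertible_det_nz)

lemma regular_if_sigma_min_pos:
  assumes "0 < sigma_min (Dh h z)"
  shows "z \<in> regular"
proof -
  have "u = 0" if "gram z *v u = 0" for u
  proof -
    have "norm (adjoint (Dh h z) u) ^ 2 = u \<bullet> (gram z *v u)"
      unfolding gram_mult power2_norm_eq_inner
      by (simp add: adjoint_clauses[OF linear_Dh] inner_commute)
    with that have "sigma_min (Dh h z) * norm u \<le> 0"
      using sigma_min_mult_norm_le[OF linear_Dh, of z u] by simp
    with assms show "u = 0" by (simp add: mult_le_0_iff)
  qed
  then have "inj ((*v) (gram z))"
    by (simp add: linear_injective_0 matrix_vector_mul_linear)
  then show ?thesis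
    using det_nz_iff_inj[OF matrix_vector_mul_linear[of "gram z"]] by (simp add: regular_def)
qed

lemma regular_imp_fullrank: "z \<in> regular \<Longrightarrow> z \<in> fullrank_set h"
proof -
  assume z: "z \<in> regular"
  have "range (Dh h z) = UNIV"
  proof (intro set_eqI iffI)
    fix y :: "real^'m"
    obtain u where "gram z *v u = y"
      using cramer[of "gram z" _ y] z by (auto simp: regular_def)
    then show "y \<in> range (Dh h z)" unfolding gram_mult by blast
  qed auto
  then show ?thesis unfolding fullrank_set_def by simp
qed

text \<open>Cramer's rule for gram z *v \<lambda> = Dh h z (grad f z); this closed form of the
  least-squares multiplier is what makes it visibly smooth on the regular set.\<close>

definition multiplier :: "'m \<Rightarrow> 'a \<Rightarrow> real" where
  "multiplier k z =
    det (\<chi> i j. if j = k then Dh h z (grad f z) $ i else gram z $ i $ j) / det (gram z)"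

lemma gram_mult_multiplier:
  "z \<in> regular \<Longrightarrow> gram z *v (\<chi> k. multiplier k z) = Dh h z (grad f z)"
  using cramer[of "gram z" "\<chi> k. multiplier k z"] by (simp add: regular_def multiplier_def)

lemma lam_eq_multiplier:
  assumes "z \<in> regular"
  shows "lam f h z = (\<chi> k. multiplier k z)"
proof -
  have "gram z *v lam f h z = Dh h z (grad f z)"
    unfolding lam_def
    by (rule gram_mult_mp_pinv_adjoint[OF linear_Dh gram_mult invertible_gram[OF assms]])
  with assms show ?thesis
    using cramer[of "gram z" _ "Dh h z (grad f z)"] by (simp add: regular_def multiplier_def)
qed

lemma smooth_on_multiplier: "smooth_on regular (multiplier k)"
proof -
  have rhs: "Dh h z (grad f z) $ i = (\<Sum>b\<in>Basis. dir_deriv (hc i) b z * dir_deriv f b z)" for z i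
    by (simp add: Dh_eq_jac jac_eq_inner_grad[OF differentiable_hc] inner_grad_grad mult.commute)
  let ?A = "\<lambda>z. \<chi> i j. if j = k then Dh h z (grad f z) $ i else gram z $ i $ j"
  have "smooth_on regular (\<lambda>z. ?A z $ i $ j)" for i j
    by (cases "j = k")
      (simp_all add: rhs smooth_on_gram smooth_on_sum smooth_on_mult smooth_on_dir_deriv_hc
        smooth_on_dir_deriv_f)
  then show ?thesis
    unfolding multiplier_def[abs_def]
    by (intro smooth_on_divide smooth_on_det smooth_on_gram) (auto simp: regular_def)
qed

lemma differentiable_multiplier: "z \<in> regular \<Longrightarrow> multiplier k differentiable (at z)"
  by (rule smooth_on_differentiable[OF smooth_on_multiplier])

lemma frechet_derivative_lam:
  assumes "z \<in> regular"
  shows "frechet_derivative (lam f h) (at z) = jac multiplier z"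
proof -
  have "((\<lambda>z. \<chi> k. multiplier k z) has_derivative jac multiplier z) (at z)"
    using has_derivative_jac[of "\<lambda>z. \<chi> k. multiplier k z" z] differentiable_multiplier[OF assms]
    by simp
  then have "(lam f h has_derivative jac multiplier z) (at z)"
    by (rule has_derivative_transform_within_open[OF _ open_regular assms])
      (simp add: lam_eq_multiplier)
  then show ?thesis by (rule frechet_derivative_at[symmetric])
qed

lemma Dh_gradM: "z \<in> regular \<Longrightarrow> Dh h z (gradM f h z) = 0"
  unfolding gradM_def linear_diff[OF linear_Dh] gram_mult[symmetric]
  by (simp add: lam_eq_multiplier gram_mult_multiplier)

text \<open>On the open set regular, gfun f h \<beta> agrees with the following manifestly smooth
  function.\<close>

definition merit :: "real \<Rightarrow> 'a \<Rightarrow> real" where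
  "merit \<beta> z = f z - (\<Sum>i\<in>UNIV. hc i z * multiplier i z) + \<beta> * (\<Sum>i\<in>UNIV. hc i z * hc i z)"

definition merit_deriv :: "real \<Rightarrow> 'a \<Rightarrow> 'a \<Rightarrow> real" where
  "merit_deriv \<beta> v z = dir_deriv f v z
    - (\<Sum>i\<in>UNIV. hc i z * dir_deriv (multiplier i) v z + dir_deriv (hc i) v z * multiplier i z)
    + \<beta> * (\<Sum>i\<in>UNIV. hc i z * dir_deriv (hc i) v z + dir_deriv (hc i) v z * hc i z)"

lemma gfun_eq_merit: "z \<in> regular \<Longrightarrow> gfun f h \<beta> z = merit \<beta> z"
  unfolding gfun_def merit_def power2_norm_eq_inner by (simp add: lam_eq_multiplier inner_vec_def)

lemma smooth_on_merit: "smooth_on regular (merit \<beta>)"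
  unfolding merit_def[abs_def]
  by (intro smooth_on_add smooth_on_diff smooth_on_sum smooth_on_mult smooth_on_const smooth_on_f
      smooth_on_hc smooth_on_multiplier)

lemma merit_has_derivative:
  assumes "z \<in> regular"
  shows "(merit \<beta> has_derivative (\<lambda>v. merit_deriv \<beta> v z)) (at z)"
  unfolding merit_def[abs_def] merit_deriv_def
  by (intro has_derivative_add has_derivative_diff has_derivative_sum has_derivative_mult
      has_derivative_mult_right smooth_on_has_derivative[OF smooth_on_f UNIV_I]
      smooth_on_has_derivative[OF smooth_on_hc UNIV_I]
      smooth_on_has_derivative[OF smooth_on_multiplier assms])

lemma grad_gfun_eq_grad_merit: "z \<in> regular \<Longrightarrow> grad (gfun f h \<beta>) z = grad (merit \<beta>) z"
  unfolding grad_def by (simp add: frechet_derivative_cong_open[OF open_regular _ gfun_eq_merit])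

lemma inner_grad_gfun:
  assumes "z \<in> regular"
  shows "u \<bullet> grad (gfun f h \<beta>) z
    = u \<bullet> gradM f h z - h z \<bullet> jac multiplier z u + 2 * \<beta> * (Dh h z u \<bullet> h z)"
proof -
  have "u \<bullet> grad (gfun f h \<beta>) z = merit_deriv \<beta> u z"
    using merit_has_derivative[OF assms]
    by (metis grad_gfun_eq_grad_merit[OF assms] dir_deriv_eq_inner_grad differentiableI
        frechet_derivative_at)
  also have "\<dots> = u \<bullet> gradM f h z - h z \<bullet> jac multiplier z u + 2 * \<beta> * (Dh h z u \<bullet> h z)"
    unfolding gradM_def merit_deriv_def inner_diff_right adjoint_clauses(1)[OF linear_Dh]
      dir_deriv_eq_inner_grad[OF smooth_on_differentiable[OF smooth_f UNIV_I], symmetric]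
    by (simp add: lam_eq_multiplier[OF assms] Dh_eq_jac jac_def inner_vec_def sum.distrib
        sum_distrib_left algebra_simps)
  finally show ?thesis .
qed

lemma inner_hess_gfun:
  assumes z: "z \<in> regular" and v: "Dh h z v = 0"
  shows "v \<bullet> hess (gfun f h \<beta>) z v = dir_deriv2 f v z
    - (\<Sum>i\<in>UNIV. hc i z * dir_deriv2 (multiplier i) v z + dir_deriv2 (hc i) v z * multiplier i z)
    + 2 * \<beta> * (\<Sum>i\<in>UNIV. hc i z * dir_deriv2 (hc i) v z)"
proof -
  have dhv: "dir_deriv (hc i) v z = 0" for i
    using v unfolding Dh_eq_jac jac_def by (simp add: vec_eq_iff)
  have "hess (gfun f h \<beta>) z = hess (merit \<beta>) z"
    unfolding hess_def
    by (rule frechet_derivative_cong_open[OF open_regular z grad_gfun_eq_grad_merit])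
  then have "v \<bullet> hess (gfun f h \<beta>) z v = dir_deriv2 (merit \<beta>) v z"
    by (simp add: inner_hess[OF open_regular smooth_on_merit z])
  also have "\<dots> = dir_deriv (\<lambda>y. merit_deriv \<beta> v y) v z"
    using frechet_derivative_cong_open[OF open_regular z, of "\<lambda>y. dir_deriv (merit \<beta>) v y"]
      frechet_derivative_at[OF merit_has_derivative] by metis
  also have "\<dots> = dir_deriv2 f v z
    - (\<Sum>i\<in>UNIV. hc i z * dir_deriv2 (multiplier i) v z + dir_deriv2 (hc i) v z * multiplier i z)
    + 2 * \<beta> * (\<Sum>i\<in>UNIV. hc i z * dir_deriv2 (hc i) v z)"
  proof -
    have "((\<lambda>y. merit_deriv \<beta> v y) has_derivative (\<lambda>w. dir_deriv (\<lambda>y. dir_deriv f v y) w z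
        - (\<Sum>i\<in>UNIV. (hc i z * dir_deriv (\<lambda>y. dir_deriv (multiplier i) v y) w z
              + dir_deriv (hc i) w z * dir_deriv (multiplier i) v z)
            + (dir_deriv (hc i) v z * dir_deriv (multiplier i) w z
              + dir_deriv (\<lambda>y. dir_deriv (hc i) v y) w z * multiplier i z))
        + \<beta> * (\<Sum>i\<in>UNIV. (hc i z * dir_deriv (\<lambda>y. dir_deriv (hc i) v y) w z
              + dir_deriv (hc i) w z * dir_deriv (hc i) v z)
            + (dir_deriv (hc i) v z * dir_deriv (hc i) w z
              + dir_deriv (\<lambda>y. dir_deriv (hc i) v y) w z * hc i z)))) (at z)"
      unfolding merit_deriv_def
      by (intro has_derivative_add has_derivative_diff has_derivative_sum has_derivative_mult
          has_derivative_mult_right smooth_on_has_derivative[OF smooth_on_dir_deriv_f UNIV_I]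
          smooth_on_has_derivative[OF smooth_on_dir_deriv_hc UNIV_I]
          smooth_on_has_derivative[OF smooth_on_dir_deriv[OF open_regular smooth_on_multiplier] z]
          smooth_on_has_derivative[OF smooth_on_hc UNIV_I]
          smooth_on_has_derivative[OF smooth_on_multiplier z])
    from frechet_derivative_at[OF this, symmetric] show ?thesis
      by (simp add: dhv sum.distrib sum_distrib_left algebra_simps)
  qed
  finally show ?thesis .
qed

lemma inner_hessM:
  assumes z: "z \<in> regular" and v: "Dh h z v = 0"
  shows "v \<bullet> hessM f h z v
    = dir_deriv2 f v z - (\<Sum>i\<in>UNIV. multiplier i z * dir_deriv2 (hc i) v z)"
proof -
  have "Proj h z v = v" unfolding Proj_def using v by (intro closest_point_self) simp
  then have "v \<bullet> hessM f h z v
      = v \<bullet> (hess f z v - (\<Sum>i\<in>UNIV. lam f h z $ i *\<^sub>R hess (hc i) z v))"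
    unfolding hessM_def o_def Proj_def using inner_closest_point_kernel[OF linear_Dh v] by simp
  then show ?thesis
    by (simp add: inner_diff_right inner_sum_right lam_eq_multiplier[OF z]
        inner_hess[OF open_UNIV smooth_f UNIV_I] inner_hess[OF open_UNIV smooth_h UNIV_I])
qed

lemma Dh_adjoint_deriv_eq:
  "frechet_derivative (\<lambda>z. Blinfun (adjoint (Dh h z))) (at y) = adjoint_jac_deriv hc y"
  by (simp add: Dh_eq_jac)

lemma lam_adjoint_deriv_eq:
  "y \<in> regular \<Longrightarrow>
    frechet_derivative (\<lambda>z. Blinfun (adjoint (frechet_derivative (lam f h) (at z)))) (at y)
    = adjoint_jac_deriv multiplier y"
  by (rule frechet_derivative_cong_open[OF open_regular]) (simp_all add: frechet_derivative_lam)

lemma inner_hessM_ge: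
  assumes z: "z \<in> regular" and v: "Dh h z v = 0" and \<beta>: "0 \<le> \<beta>"
  shows "v \<bullet> hess (gfun f h \<beta>) z v
    - (onorm (adjoint_jac_deriv multiplier z) + 2 * \<beta> * onorm (adjoint_jac_deriv hc z))
      * norm (h z) * (v \<bullet> v)
    \<le> v \<bullet> hessM f h z v"
proof -
  let ?E_lam = "\<Sum>i\<in>UNIV. h z $ i * dir_deriv2 (multiplier i) v z"
  let ?E_h = "\<Sum>i\<in>UNIV. h z $ i * dir_deriv2 (hc i) v z"
  have "v \<bullet> hessM f h z v = v \<bullet> hess (gfun f h \<beta>) z v + ?E_lam - 2 * \<beta> * ?E_h"
    unfolding inner_hessM[OF z v] inner_hess_gfun[OF z v]
    by (simp add: sum.distrib sum_distrib_left algebra_simps)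
  moreover have "\<bar>?E_lam\<bar> \<le> onorm (adjoint_jac_deriv multiplier z) * (v \<bullet> v) * norm (h z)"
    by (rule abs_sum_dir_deriv2_le[OF open_regular smooth_on_multiplier z])
  moreover have "\<bar>?E_h\<bar> \<le> onorm (adjoint_jac_deriv hc z) * (v \<bullet> v) * norm (h z)"
    by (rule abs_sum_dir_deriv2_le[OF open_UNIV smooth_h UNIV_I])
  then have "2 * \<beta> * ?E_h \<le> 2 * \<beta> * (onorm (adjoint_jac_deriv hc z) * (v \<bullet> v) * norm (h z))"
    using \<beta> by (intro mult_left_mono) auto
  ultimately show ?thesis by (simp add: algebra_simps)
qed

end

section \<open>Uniform bounds near the feasible set\<close>

locale constraint_region = smooth_constraints +
  fixes R \<sigma> :: real
  assumes sigma_pos: "0 < \<sigma>"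
    and sigma_min_ge: "\<And>y. norm (h y) \<le> R \<Longrightarrow> \<sigma> \<le> sigma_min (Dh h y)"
    and compact_region: "compact {y. norm (h y) \<le> R}"
begin

abbreviation region :: "'a set" where
  "region \<equiv> {y. norm (h y) \<le> R}"

lemma sigma_min_pos: "y \<in> region \<Longrightarrow> 0 < sigma_min (Dh h y)"
  using sigma_pos sigma_min_ge[of y] by simp

lemma region_subset_regular: "region \<subseteq> regular"
  using sigma_min_pos regular_if_sigma_min_pos by blast

lemma bdd_above_region_image:
  fixes k K :: "'a \<Rightarrow> real"
  assumes "continuous_on regular K" and "\<And>y. y \<in> region \<Longrightarrow> k y \<le> K y"
  shows "bdd_above (k ` region)"
proof -
  have "compact (K ` region)"
    by (rule compact_continuous_image[OF continuous_on_subset[OF assms(1) region_subset_regular]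
          compact_region])
  then have "bdd_above (K ` region)" by (intro bounded_imp_bdd_above compact_imp_bounded)
  then obtain M where M: "\<And>y. y \<in> region \<Longrightarrow> K y \<le> M" by (auto simp: bdd_above_def)
  show ?thesis
  proof (rule bdd_aboveI2)
    show "k y \<le> M" if "y \<in> region" for y using assms(2)[OF that] M[OF that] by linarith
  qed
qed

lemma beta_bounds:
  assumes \<beta>: "max (SUP y\<in>region. beta2 f h y) (SUP y\<in>region. beta3 h y) < \<beta>"
    and y: "y \<in> region"
  shows "onorm (jac multiplier y) / sigma_min (Dh h y) < \<beta>" "1 / sigma_min (Dh h y) < \<beta>"
proof -
  let ?g = "\<lambda>y. (\<Sum>i\<in>UNIV. norm (grad (multiplier i) y)) / \<sigma>"
  have "beta2 f h y \<le> ?g y" if "y \<in> region" for y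
  proof -
    have reg: "y \<in> regular" using that region_subset_regular by blast
    have "beta2 f h y = onorm (jac multiplier y) / sigma_min (Dh h y)"
      unfolding beta2_def C_lam_def frechet_derivative_lam[OF reg] ..
    also have "\<dots> \<le> onorm (jac multiplier y) / \<sigma>"
      using sigma_pos sigma_min_ge[of y] that
        linear_jac[of multiplier, OF differentiable_multiplier[OF reg]]
      by (intro divide_left_mono onorm_pos_le) (auto simp: linear_conv_bounded_linear)
    also have "\<dots> \<le> ?g y"
      using onorm_jac_le[of multiplier, OF differentiable_multiplier[OF reg]] sigma_pos
      by (simp add: divide_right_mono)
    finally show ?thesis .
  qed
  moreover have "continuous_on regular ?g"
    by (intro continuous_on_divide continuous_on_sum continuous_on_norm continuous_on_const
        continuous_on_grad[OF open_regular smooth_on_multiplier]) (use sigma_pos in auto)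
  ultimately have "bdd_above (beta2 f h ` region)"
    by (intro bdd_above_region_image[of ?g])
  then have "beta2 f h y \<le> (SUP y\<in>region. beta2 f h y)" using y by (rule cSUP_upper2) simp
  then have "beta2 f h y < \<beta>" using \<beta> by linarith
  then show "onorm (jac multiplier y) / sigma_min (Dh h y) < \<beta>"
    unfolding beta2_def C_lam_def frechet_derivative_lam[OF subsetD[OF region_subset_regular y]] .
  have "beta3 h y \<le> 1 / \<sigma>" if "y \<in> region" for y
    using sigma_pos sigma_min_ge[of y] that unfolding beta3_def by (intro divide_left_mono) auto
  then have "bdd_above (beta3 h ` region)"
    by (intro bdd_above_region_image[of "\<lambda>_. 1 / \<sigma>"] continuous_on_const)
  then have "beta3 h y \<le> (SUP y\<in>region. beta3 h y)" using y by (rule cSUP_upper2) simp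
  then have "beta3 h y < \<beta>" using \<beta> by linarith
  then show "1 / sigma_min (Dh h y) < \<beta>" unfolding beta3_def .
qed

lemma Cconst_ge:
  assumes y: "y \<in> region"
  shows "2 * onorm (adjoint_jac_deriv hc y) / \<sigma> + onorm (adjoint_jac_deriv multiplier y)
    \<le> Cconst f h R \<sigma>"
proof -
  obtain K\<^sub>h where K\<^sub>h: "continuous_on UNIV K\<^sub>h"
    "\<And>y. y \<in> UNIV \<Longrightarrow> onorm (adjoint_jac_deriv hc y) \<le> K\<^sub>h y"
    using onorm_adjoint_jac_deriv_continuous_majorant[of UNIV hc, OF open_UNIV smooth_h] by blast
  obtain K\<^sub>l where K\<^sub>l: "continuous_on regular K\<^sub>l"
    "\<And>y. y \<in> regular \<Longrightarrow> onorm (adjoint_jac_deriv multiplier y) \<le> K\<^sub>l y"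
    using onorm_adjoint_jac_deriv_continuous_majorant[of regular multiplier,
        OF open_regular smooth_on_multiplier] by blast
  let ?c = "\<lambda>y. 2 * onorm (adjoint_jac_deriv hc y) / \<sigma> + onorm (adjoint_jac_deriv multiplier y)"
  have "?c y \<le> 2 * K\<^sub>h y / \<sigma> + K\<^sub>l y" if "y \<in> region" for y
    using K\<^sub>h(2)[of y] K\<^sub>l(2)[of y] that region_subset_regular sigma_pos
    by (intro add_mono divide_right_mono mult_left_mono) auto
  moreover have "continuous_on regular (\<lambda>y. 2 * K\<^sub>h y / \<sigma> + K\<^sub>l y)"
    using sigma_pos
    by (intro continuous_on_add continuous_on_divide continuous_on_mult continuous_on_const
        continuous_on_subset[OF K\<^sub>h(1)] K\<^sub>l(1)) auto
  ultimately have "bdd_above (?c ` region)"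
    by (intro bdd_above_region_image[of "\<lambda>y. 2 * K\<^sub>h y / \<sigma> + K\<^sub>l y"])
  moreover have "Cconst f h R \<sigma> = (SUP y\<in>region. ?c y)"
    unfolding Cconst_def Dh_adjoint_deriv_eq
    using region_subset_regular by (intro SUP_cong refl) (auto simp: lam_adjoint_deriv_eq)
  ultimately show ?thesis using cSUP_upper[OF y] by simp
qed

lemma curvature_term_le:
  assumes y: "y \<in> region" and \<beta>: "0 \<le> \<beta>"
    and hy: "norm (h y) \<le> \<epsilon>" and \<beta>hy: "\<beta> * sigma_min (Dh h y) * norm (h y) \<le> \<epsilon>"
  shows "(onorm (adjoint_jac_deriv multiplier y) + 2 * \<beta> * onorm (adjoint_jac_deriv hc y))
    * norm (h y) \<le> Cconst f h R \<sigma> * \<epsilon>"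
proof -
  let ?A = "onorm (adjoint_jac_deriv hc y)" and ?L = "onorm (adjoint_jac_deriv multiplier y)"
  have reg: "y \<in> regular" using y region_subset_regular by blast
  have A: "0 \<le> ?A"
    by (rule onorm_pos_le[OF bounded_linear_adjoint_jac_deriv[of UNIV hc, OF open_UNIV smooth_h]])
      simp
  have L: "0 \<le> ?L"
    by (rule onorm_pos_le[OF bounded_linear_adjoint_jac_deriv[of regular multiplier,
          OF open_regular smooth_on_multiplier reg]])
  have "\<beta> * norm (h y) * \<sigma> \<le> \<beta> * norm (h y) * sigma_min (Dh h y)"
    using sigma_min_ge[of y] y \<beta> by (intro mult_left_mono) auto
  with \<beta>hy sigma_pos have \<beta>h: "\<beta> * norm (h y) \<le> \<epsilon> / \<sigma>"
    by (simp add: field_simps)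
  have "(?L + 2 * \<beta> * ?A) * norm (h y) = ?L * norm (h y) + 2 * ?A * (\<beta> * norm (h y))"
    by (simp add: algebra_simps)
  also have "\<dots> \<le> ?L * \<epsilon> + 2 * ?A * (\<epsilon> / \<sigma>)"
    using A L hy \<beta>h by (intro add_mono mult_left_mono) auto
  also have "\<dots> = (2 * ?A / \<sigma> + ?L) * \<epsilon>" by (simp add: algebra_simps)
  also have "\<dots> \<le> Cconst f h R \<sigma> * \<epsilon>"
    using Cconst_ge[OF y] hy norm_ge_zero[of "h y"] by (intro mult_right_mono) linarith+
  finally show ?thesis .
qed

lemma merit_gradient_bounds:
  assumes x: "x \<in> region"
    and \<beta>: "max (SUP y\<in>region. beta2 f h y) (SUP y\<in>region. beta3 h y) < \<beta>"
    and g: "norm (grad (gfun f h \<beta>) x) \<le> \<epsilon>"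
  shows "norm (h x) \<le> \<epsilon>" "\<beta> * sigma_min (Dh h x) * norm (h x) \<le> \<epsilon>"
    "norm (gradM f h x) \<le> 2 * \<epsilon>"
proof -
  have reg: "x \<in> regular" using x region_subset_regular by blast
  have "bounded_linear (jac multiplier x)"
    using linear_jac[of multiplier, OF differentiable_multiplier[OF reg]] linear_conv_bounded_linear
    by blast
  from first_order_estimates[OF linear_Dh this sigma_min_pos[OF x]
      sigma_min_mult_norm_le[OF linear_Dh] Dh_gradM[OF reg] inner_grad_gfun[OF reg] g
      beta_bounds[OF \<beta> x]]
  show "norm (h x) \<le> \<epsilon>" "\<beta> * sigma_min (Dh h x) * norm (h x) \<le> \<epsilon>"
    "norm (gradM f h x) \<le> 2 * \<epsilon>" by simp_all
qed

lemma hessM_psd_shift: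
  assumes x: "x \<in> region"
    and \<beta>: "max (SUP y\<in>region. beta2 f h y) (SUP y\<in>region. beta3 h y) < \<beta>"
    and hess_g: "psd_shift_on UNIV (hess (gfun f h \<beta>) x) \<epsilon>2"
    and hx: "norm (h x) \<le> \<epsilon>" and \<beta>hx: "\<beta> * sigma_min (Dh h x) * norm (h x) \<le> \<epsilon>"
  shows "psd_shift_on {v. Dh h x v = 0} (hessM f h x) (\<epsilon>2 + Cconst f h R \<sigma> * \<epsilon>)"
  unfolding psd_shift_on_def
proof
  have "0 < 1 / sigma_min (Dh h x)" using sigma_min_pos[OF x] by simp
  with beta_bounds(2)[OF \<beta> x] have \<beta>0: "0 \<le> \<beta>" by linarith
  let ?K = "onorm (adjoint_jac_deriv multiplier x) + 2 * \<beta> * onorm (adjoint_jac_deriv hc x)"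
  fix v assume "v \<in> {v. Dh h x v = 0}"
  then have "v \<bullet> hess (gfun f h \<beta>) x v - ?K * norm (h x) * (v \<bullet> v) \<le> v \<bullet> hessM f h x v"
    using inner_hessM_ge[OF subsetD[OF region_subset_regular x] _ \<beta>0] by simp
  moreover have "0 \<le> v \<bullet> hess (gfun f h \<beta>) x v + \<epsilon>2 * (v \<bullet> v)"
    using hess_g unfolding psd_shift_on_def by simp
  moreover have "?K * norm (h x) * (v \<bullet> v) \<le> Cconst f h R \<sigma> * \<epsilon> * (v \<bullet> v)"
    using curvature_term_le[OF x \<beta>0 hx \<beta>hx] by (rule mult_right_mono) simp
  ultimately show "0 \<le> v \<bullet> hessM f h x v + (\<epsilon>2 + Cconst f h R \<sigma> * \<epsilon>) * (v \<bullet> v)"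
    by (simp add: algebra_simps)
qed

end

theorem mainTheorem5:
  fixes f :: "'a::euclidean_space \<Rightarrow> real" and h :: "'a \<Rightarrow> real^'m"
    and R \<sigma> \<beta> \<epsilon>1 \<epsilon>2 :: real and x :: 'a
  assumes f_smooth: "smooth_real f"
    and h_smooth: "\<forall>i. smooth_real (\<lambda>y. h y $ i)"
    and A1: "R > 0" "\<sigma> > 0" "\<forall>y. norm (h y) \<le> R \<longrightarrow> sigma_min (Dh h y) \<ge> \<sigma>"
    and A2: "compact {y. h y = 0}" "compact {y. norm (h y) \<le> R}"
    and beta: "\<beta> > max (SUP y\<in>{y. norm (h y) \<le> R}. beta2 f h y)
                        (SUP y\<in>{y. norm (h y) \<le> R}. beta3 h y)"
    and xC: "norm (h x) \<le> R"
    and gradg: "norm (grad (gfun f h \<beta>) x) \<le> \<epsilon>1"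
    and hessg: "psd_shift_on UNIV (hess (gfun f h \<beta>) x) \<epsilon>2"
  shows "approx_socp f h \<epsilon>1 (2 * \<epsilon>1) (\<epsilon>2 + Cconst f h R \<sigma> * \<epsilon>1) x
     \<and> psd_shift_on {v. Dh h x v = 0} (hessM f h x) (\<epsilon>2 + Cconst f h R \<sigma> * \<epsilon>1)"
proof -
  interpret constraint_region f h R \<sigma>
    using f_smooth h_smooth A1(2,3) A2(2) by unfold_locales (auto intro: smooth_real_imp_smooth_on)
  have x: "x \<in> region" using xC by simp
  note first_order = merit_gradient_bounds[OF x beta gradg]
  have "psd_shift_on {v. Dh h x v = 0} (hessM f h x) (\<epsilon>2 + Cconst f h R \<sigma> * \<epsilon>1)"
    by (rule hessM_psd_shift[OF x beta hessg first_order(1,2)])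
  with first_order show ?thesis
    unfolding approx_socp_def using regular_imp_fullrank region_subset_regular x by blast
qed

end
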